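(* Let $c_0=7/(2\sqrt3)$ and $c_1=2\sqrt2$, and let $\alpha(c)$ be the linear function of $c$ with $\alpha(c_0)=\sqrt3/4$ and $\alpha(c_1)=1/\sqrt2$. Then, for $c>0$, $$ s(c)\ge\begin{cases}\frac{9c^2}{28}, & c\le c_0,\\[2pt] -c^2+7\alpha c+\frac{c}{\alpha}-11\alpha^2-2-\frac{1}{4\alpha^2}, & c_0\le c\le c_1,\end{cases}$$ where $\alpha=\alpha(c)$.
   Context: $[n]=\{1,\dots,n\}$; for $A\subset\mathbb Z$, $A+A=\{a+b:a,b\in A\}$. Let $s(k,n)=\max\{|A+A|: A\subseteq[n],\ |A|=k\}$ and, for real $c>0$, $s(c)=\liminf_{n\to\infty} s(\lfloor cn^{1/2}\rfloor,n)/n$. *)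

theory Defs
  imports "HOL-Analysis.Analysis"
begin

definition sumset :: "int set \<Rightarrow> int set" where
  "sumset A = {a + b | a b. a \<in> A \<and> b \<in> A}"

definition s_kn :: "nat \<Rightarrow> nat \<Rightarrow> nat" where
  "s_kn k n = Max {card (sumset A) | A. A \<subseteq> {1..int n} \<and> card A = k}"

definition s_c :: "real \<Rightarrow> ereal" where
  "s_c c = liminf (\<lambda>n::nat. ereal (real (s_kn (nat \<lfloor>c * sqrt (real n)\<rfloor>) n) / real n))"

definition c0 :: real where "c0 = 7 / (2 * sqrt 3)"
definition c1 :: real where "c1 = 2 * sqrt 2"

definition alpha :: "real \<Rightarrow> real" where
  "alpha c = sqrt 3 / 4 + (1 / sqrt 2 - sqrt 3 / 4) / (c1 - c0) * (c - c0)"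

end

theory Submission
  imports Defs "HOL-Real_Asymp.Real_Asymp"
begin

(* The lower bounds come from one construction.  Let H be the lattice hexagon with vertices
   (0,0), (L,0), (L+T,T), (L+T,L+T), (T,L+T), (0,L), where 0 <= T <= L, and let A be the image of
   its boundary under (x,y) |-> x + B y + 1 with B = 2L+2T+1.  Then |A| <= 4L+2T+6 and
   A lies in [1, 2(L+T)(L+T+1)+1].  Every lattice point of the doubled hexagon 2H is a sum of two
   boundary points, and since B exceeds every x-coordinate in 2H the map keeps these points
   distinct, so |A+A| >= |2H| >= 2L(2L+4T+1).  Taking L ~ l sqrt n and T ~ t l sqrt n gives
   s(c) >= 4(1+2t) l^2 whenever (4+2t) l <= c and 2(1+t)^2 l^2 <= 1.  The choice t = 1 yields
   c^2/3 for c <= 3/sqrt 2; beyond that, making both constraints tight yields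
   -c^2 + 4 sqrt 2 c - 6.  Both dominate the stated bounds by elementary inequalities. *)

lemma sumsetI: "a \<in> A \<Longrightarrow> b \<in> A \<Longrightarrow> a + b \<in> sumset A"
  unfolding sumset_def by blast

lemma sumset_mono: "A \<subseteq> B \<Longrightarrow> sumset A \<subseteq> sumset B"
  unfolding sumset_def by blast

lemma finite_sumset:
  assumes "finite A"
  shows "finite (sumset A)"
proof -
  have "sumset A = (\<lambda>(a, b). a + b) ` (A \<times> A)"
    unfolding sumset_def by auto
  then show ?thesis
    using assms by simp
qed

lemma card_sumset_le_s_kn:
  assumes A: "A \<subseteq> {1..int n}" and "card A \<le> k" "k \<le> n"
  shows "card (sumset A) \<le> s_kn k n"
proof -
  have "finite A"
    using A finite_subset by blast
  have "k - card A \<le> card ({1..int n} - A)"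
    using A \<open>finite A\<close> \<open>k \<le> n\<close> by (simp add: card_Diff_subset)
  then obtain C where C: "C \<subseteq> {1..int n} - A" "card C = k - card A"
    by (meson obtain_subset_with_card_n)
  define A' where "A' = A \<union> C"
  have "finite C"
    using C(1) finite_subset by blast
  have "A \<inter> C = {}"
    using C(1) by blast
  then have "card A' = card A + card C"
    unfolding A'_def using \<open>finite A\<close> \<open>finite C\<close> by (intro card_Un_disjoint)
  then have A': "A' \<subseteq> {1..int n}" "card A' = k"
    using A C \<open>card A \<le> k\<close> by (auto simp: A'_def)
  have "finite A'"
    using A'(1) finite_subset by blast
  then have "card (sumset A) \<le> card (sumset A')"
    by (intro card_mono finite_sumset sumset_mono) (auto simp: A'_def)
  also have "\<dots> \<le> s_kn k n"
    unfolding s_kn_def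
  proof (rule Max_ge)
    have "{card (sumset A) |A. A \<subseteq> {1..int n} \<and> card A = k}
            \<subseteq> (\<lambda>A. card (sumset A)) ` Pow {1..int n}"
      by auto
    then show "finite {card (sumset A) |A. A \<subseteq> {1..int n} \<and> card A = k}"
      by (rule finite_subset) simp
    show "card (sumset A') \<in> {card (sumset A) |A. A \<subseteq> {1..int n} \<and> card A = k}"
      using A' by blast
  qed
  finally show ?thesis .
qed

lemma s_c_nonneg: "0 \<le> s_c c"
  unfolding s_c_def by (intro Liminf_bounded always_eventually) simp

definition hexagon :: "int \<Rightarrow> int \<Rightarrow> (int \<times> int) set" where
  "hexagon L T = {(x, y). 0 \<le> x \<and> x \<le> L + T \<and> 0 \<le> y \<and> y \<le> L + T \<and> x - y \<le> L \<and> y - x \<le> L}"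

definition hexagon_boundary :: "int \<Rightarrow> int \<Rightarrow> (int \<times> int) set" where
  "hexagon_boundary L T =
     (\<lambda>x. (x, 0)) ` {0..L} \<union> (\<lambda>y. (L + y, y)) ` {0..T} \<union> (\<lambda>y. (L + T, y)) ` {T..L + T} \<union>
     (\<lambda>x. (x, L + T)) ` {T..L + T} \<union> (\<lambda>x. (x, L + x)) ` {0..T} \<union> (\<lambda>y. (0, y)) ` {0..L}"

lemma mem_hexagon_boundary:
  "(x, y) \<in> hexagon_boundary L T \<longleftrightarrow>
     (0 \<le> x \<and> x \<le> L \<and> y = 0) \<or> (0 \<le> y \<and> y \<le> T \<and> x = L + y) \<or>
     (x = L + T \<and> T \<le> y \<and> y \<le> L + T) \<or> (T \<le> x \<and> x \<le> L + T \<and> y = L + T) \<or>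
     (0 \<le> x \<and> x \<le> T \<and> y = L + x) \<or> (x = 0 \<and> 0 \<le> y \<and> y \<le> L)"
  unfolding hexagon_boundary_def by (simp add: image_iff)

lemma finite_hexagon_boundary: "finite (hexagon_boundary L T)"
  unfolding hexagon_boundary_def by simp

lemma card_hexagon_boundary:
  assumes "0 \<le> L" "0 \<le> T"
  shows "int (card (hexagon_boundary L T)) \<le> 4*L + 2*T + 6"
proof -
  have "card (hexagon_boundary L T) \<le>
          card {0..L} + card {0..T} + card {T..L + T} + card {T..L + T} + card {0..T} + card {0..L}"
    unfolding hexagon_boundary_def
    by (rule order_trans[OF card_Un_le] add_mono card_image_le finite_atLeastAtMost_int)+
  then show ?thesis
    using assms by simp
qed

lemma hexagon_boundary_subset:
  assumes "0 \<le> L" "0 \<le> T"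
  shows "hexagon_boundary L T \<subseteq> hexagon L T"
  using assms by (auto simp: subset_iff mem_hexagon_boundary hexagon_def)

lemma hexagon_double_subset_sums:
  assumes "0 \<le> T" "T \<le> L"
  shows "hexagon (2*L) (2*T) \<subseteq> {p + q |p q. p \<in> hexagon_boundary L T \<and> q \<in> hexagon_boundary L T}"
proof
  fix z assume "z \<in> hexagon (2*L) (2*T)"
  then obtain x y where z: "z = (x, y)"
    and xy: "0 \<le> x" "x \<le> 2*L + 2*T" "0 \<le> y" "y \<le> 2*L + 2*T" "x - y \<le> 2*L" "y - x \<le> 2*L"
    by (auto simp: hexagon_def)
  have sum: "(x, y) \<in> {p + q |p q. p \<in> hexagon_boundary L T \<and> q \<in> hexagon_boundary L T}"
    if "p \<in> hexagon_boundary L T" "q \<in> hexagon_boundary L T" "(x, y) = p + q" for p q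
    using that by blast
  \<comment> \<open>2H is the union of the parallelograms e + e' over pairs of edges e, e' of H.\<close>
  have
    "(x \<le> L \<and> y \<le> L) \<or>
     (L+T \<le> x \<and> x \<le> 2*L+T \<and> T \<le> y \<and> y \<le> T+L) \<or>
     (T \<le> x \<and> x \<le> T+L \<and> T+L \<le> y \<and> y \<le> T+2*L) \<or>
     (L+2*T \<le> x \<and> 2*T+L \<le> y) \<or>
     (y \<le> T \<and> L+y \<le> x \<and> x \<le> 2*L+y) \<or>
     (L \<le> x \<and> x \<le> L+T \<and> x-L \<le> y \<and> y \<le> x) \<or>
     (2*L+T \<le> x \<and> x-2*L \<le> y \<and> y \<le> x-L) \<or>
     (T+L \<le> y \<and> y \<le> 2*T+L \<and> y \<le> x \<and> x \<le> y+L) \<or>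
     (L \<le> y \<and> y \<le> L+T \<and> y-L \<le> x \<and> x \<le> y) \<or>
     (x \<le> T \<and> L+x \<le> y \<and> y \<le> 2*L+x) \<or>
     (L+T \<le> x \<and> x \<le> L+2*T \<and> x \<le> y \<and> y \<le> x+L) \<or>
     (2*L+T \<le> y \<and> y-2*L \<le> x \<and> x \<le> y-L)"
    using assms xy by smt
  with assms xy show "z \<in> {p + q |p q. p \<in> hexagon_boundary L T \<and> q \<in> hexagon_boundary L T}"
    unfolding z
    apply -
    apply (elim disjE conjE)
    subgoal by (rule sum[of "(x, 0)" "(0, y)"]) (auto simp: mem_hexagon_boundary)
    subgoal by (rule sum[of "(x-L-T, 0)" "(L+T, y)"]) (auto simp: mem_hexagon_boundary)
    subgoal by (rule sum[of "(0, y-L-T)" "(x, L+T)"]) (auto simp: mem_hexagon_boundary)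
    subgoal by (rule sum[of "(L+T, y-L-T)" "(x-L-T, L+T)"]) (auto simp: mem_hexagon_boundary)
    subgoal by (rule sum[of "(L+y, y)" "(x-L-y, 0)"]) (auto simp: mem_hexagon_boundary)
    subgoal by (rule sum[of "(x, x-L)" "(0, y-x+L)"]) (auto simp: mem_hexagon_boundary)
    subgoal by (rule sum[of "(x-L-T, x-2*L-T)" "(L+T, y-x+2*L+T)"]) (auto simp: mem_hexagon_boundary)
    subgoal by (rule sum[of "(y-T, y-T-L)" "(x-y+T, L+T)"]) (auto simp: mem_hexagon_boundary)
    subgoal by (rule sum[of "(y-L, y)" "(x-y+L, 0)"]) (auto simp: mem_hexagon_boundary)
    subgoal by (rule sum[of "(x, L+x)" "(0, y-L-x)"]) (auto simp: mem_hexagon_boundary)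
    subgoal by (rule sum[of "(x-L-T, x-T)" "(L+T, y-x+T)"]) (auto simp: mem_hexagon_boundary)
    subgoal by (rule sum[of "(y-2*L-T, y-L-T)" "(x-y+2*L+T, L+T)"]) (auto simp: mem_hexagon_boundary)
    done
qed

lemma finite_hexagon: "finite (hexagon L T)"
proof -
  have "hexagon L T \<subseteq> {0..L + T} \<times> {0..L + T}"
    unfolding hexagon_def by auto
  then show ?thesis
    by (rule finite_subset) simp
qed

lemma card_hexagon_ge:
  assumes "0 \<le> L" "0 \<le> T"
  shows "L * (L + 2*T + 1) \<le> int (card (hexagon L T))"
proof -
  define R where "R = {1..L} \<times> {0..L + 2*T}"
  \<comment> \<open>f maps R onto the points of H off the diagonal: x - y = d, respectively y - x = L + 1 - d.\<close>
  define f where "f = (\<lambda>(d, j). if j \<le> L + T - d then (d + j, j) else (d + j - L - T - 1, j - T))"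
  have "inj_on f R"
    unfolding inj_on_def f_def R_def by (auto split: if_splits)
  moreover have "f ` R \<subseteq> hexagon L T"
    unfolding f_def R_def hexagon_def by (auto split: if_splits)
  ultimately have "card R \<le> card (hexagon L T)"
    using finite_hexagon by (rule card_inj_on_le)
  moreover have "int (card R) = L * (L + 2*T + 1)"
    using assms by (simp add: R_def card_cartesian_product)
  ultimately show ?thesis
    by linarith
qed

lemma base_expansion_eq_iff:
  fixes B :: int
  assumes "0 \<le> x" "x < B" "0 \<le> x'" "x' < B"
  shows "x + B * y = x' + B * y' \<longleftrightarrow> x = x' \<and> y = y'"
proof
  assume eq: "x + B * y = x' + B * y'"
  have "x = (x + B * y) mod B" "x' = (x' + B * y') mod B"
    using assms by simp_all
  with eq have "x = x'"
    by simp
  with eq assms show "x = x' \<and> y = y'"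
    by simp
qed simp

definition hexagon_set :: "int \<Rightarrow> int \<Rightarrow> int set" where
  "hexagon_set L T = (\<lambda>(x, y). x + (2*L + 2*T + 1) * y + 1) ` hexagon_boundary L T"

lemma card_hexagon_set:
  assumes "0 \<le> L" "0 \<le> T"
  shows "int (card (hexagon_set L T)) \<le> 4*L + 2*T + 6"
  using card_image_le[OF finite_hexagon_boundary] card_hexagon_boundary[OF assms]
  unfolding hexagon_set_def by (meson of_nat_le_iff order_trans)

lemma hexagon_set_subset:
  assumes "0 \<le> L" "0 \<le> T"
  shows "hexagon_set L T \<subseteq> {1..(L + T) * (2*L + 2*T + 2) + 1}"
  unfolding hexagon_set_def
proof (rule image_subsetI)
  fix p assume "p \<in> hexagon_boundary L T"
  moreover obtain x y where p: "p = (x, y)"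
    by fastforce
  ultimately have "0 \<le> x" "x \<le> L + T" "0 \<le> y" "y \<le> L + T"
    using hexagon_boundary_subset[OF assms] by (auto simp: hexagon_def)
  moreover have "(2*L + 2*T + 1) * y \<le> (2*L + 2*T + 1) * (L + T)"
    using \<open>y \<le> L + T\<close> assms by (intro mult_left_mono) auto
  ultimately show "(case p of (x, y) \<Rightarrow> x + (2*L + 2*T + 1) * y + 1) \<in> {1..(L + T) * (2*L + 2*T + 2) + 1}"
    using assms unfolding p by (simp add: algebra_simps)
qed

lemma hexagon_double_subset_sumset:
  assumes "0 \<le> T" "T \<le> L"
  shows "(\<lambda>(x, y). x + (2*L + 2*T + 1) * y + 2) ` hexagon (2*L) (2*T) \<subseteq> sumset (hexagon_set L T)"
proof (rule image_subsetI)
  fix z assume "z \<in> hexagon (2*L) (2*T)"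
  then obtain a b c d where "(a, b) \<in> hexagon_boundary L T" "(c, d) \<in> hexagon_boundary L T"
    and z: "z = (a + c, b + d)"
    using hexagon_double_subset_sums[OF assms] by fastforce
  then have "(a + (2*L + 2*T + 1) * b + 1) + (c + (2*L + 2*T + 1) * d + 1) \<in> sumset (hexagon_set L T)"
    unfolding hexagon_set_def by (intro sumsetI pair_imageI)
  then show "(case z of (x, y) \<Rightarrow> x + (2*L + 2*T + 1) * y + 2) \<in> sumset (hexagon_set L T)"
    unfolding z by (simp add: algebra_simps)
qed

lemma card_sumset_hexagon_set:
  assumes "0 \<le> T" "T \<le> L"
  shows "2*L * (2*L + 4*T + 1) \<le> int (card (sumset (hexagon_set L T)))"
proof -
  let ?g = "\<lambda>(x, y). x + (2*L + 2*T + 1) * y + 2"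
  have "inj_on ?g (hexagon (2*L) (2*T))"
    unfolding inj_on_def hexagon_def by (auto simp: base_expansion_eq_iff)
  have "2*L * (2*L + 2*(2*T) + 1) \<le> int (card (hexagon (2*L) (2*T)))"
    using assms by (intro card_hexagon_ge) auto
  also have "card (hexagon (2*L) (2*T)) = card (?g ` hexagon (2*L) (2*T))"
    using \<open>inj_on ?g _\<close> by (simp add: card_image)
  also have "\<dots> \<le> card (sumset (hexagon_set L T))"
    by (intro card_mono finite_sumset hexagon_double_subset_sumset assms)
      (simp add: hexagon_set_def finite_hexagon_boundary)
  finally show ?thesis
    by simp
qed

lemma s_kn_ge_hexagon:
  fixes L T :: int and k n :: nat
  assumes "0 \<le> T" "T \<le> L" "4*L + 2*T + 6 \<le> int k" "k \<le> n"
    and "(L + T) * (2*L + 2*T + 2) + 1 \<le> int n"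
  shows "2*L * (2*L + 4*T + 1) \<le> int (s_kn k n)"
proof -
  have LT: "0 \<le> L" "0 \<le> T"
    using assms by auto
  have "hexagon_set L T \<subseteq> {1..int n}"
    using hexagon_set_subset[OF LT] assms(5) by auto
  moreover have "card (hexagon_set L T) \<le> k"
    using card_hexagon_set[OF LT] assms(3) by linarith
  ultimately have "card (sumset (hexagon_set L T)) \<le> s_kn k n"
    using assms(4) by (rule card_sumset_le_s_kn)
  then show ?thesis
    using card_sumset_hexagon_set[OF assms(1,2)] by linarith
qed

lemma floor_product_ge:
  fixes t x :: real
  assumes "0 \<le> t" "3 \<le> x"
  shows "(x - 1) * ((2 + 4*t) * x - 6) \<le> real_of_int (\<lfloor>x\<rfloor> * (2 * \<lfloor>x\<rfloor> + 4 * \<lfloor>t * x\<rfloor> + 1))"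
proof -
  have "(x - 1) * ((2 + 4*t) * x - 6) \<le> of_int \<lfloor>x\<rfloor> * (2 * of_int \<lfloor>x\<rfloor> + 4 * of_int \<lfloor>t * x\<rfloor> + 1)"
  proof (rule mult_mono)
    have "(2 + 4*t) * x = 2 * x + 4 * (t * x)"
      by (simp add: algebra_simps)
    moreover have "0 \<le> t * x"
      using assms by simp
    moreover have "x - 1 < \<lfloor>x\<rfloor>" "t * x - 1 < \<lfloor>t * x\<rfloor>"
      by linarith+
    ultimately show "(2 + 4*t) * x - 6 \<le> 2 * of_int \<lfloor>x\<rfloor> + 4 * of_int \<lfloor>t * x\<rfloor> + 1"
      and "0 \<le> (2 + 4*t) * x - 6"
      using assms by linarith+
  qed (use assms in linarith)+
  then show ?thesis
    by simp
qed

lemma s_kn_ge_hexagon_floor: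
  fixes t x y :: real and n :: nat
  assumes t: "0 \<le> t" "t \<le> 1" and x: "3 \<le> x"
    and size: "(4 + 2*t) * x + 7 \<le> y" and "y \<le> n"
    and range: "2 * (1 + t)^2 * x^2 + 2 * (1 + t) * x + 1 \<le> n"
  shows "2 * (x - 1) * ((2 + 4*t) * x - 6) \<le> real (s_kn (nat \<lfloor>y\<rfloor>) n)"
proof -
  define L where "L = \<lfloor>x\<rfloor>"
  define T where "T = \<lfloor>t * x\<rfloor>"
  have L: "x - 1 < L" "L \<le> x"
    unfolding L_def by linarith+
  have T: "t * x - 1 < T" "T \<le> t * x"
    unfolding T_def by linarith+
  have "0 \<le> T"
    unfolding T_def using t x by simp
  have "T \<le> L"
    unfolding T_def L_def using t x by (intro floor_mono) (simp add: mult_left_le_one_le)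
  have "(4 + 2*t) * x = 4 * x + 2 * (t * x)"
    by (simp add: algebra_simps)
  then have "real_of_int (4*L + 2*T + 6) < \<lfloor>y\<rfloor>"
    using L T size by linarith
  then have k: "4*L + 2*T + 6 \<le> int (nat \<lfloor>y\<rfloor>)"
    by linarith
  have kn: "nat \<lfloor>y\<rfloor> \<le> n"
    using \<open>y \<le> n\<close> by linarith
  have "real_of_int ((L + T) * (2*L + 2*T + 2) + 1) \<le> n"
  proof -
    define w where "w = (1 + t) * x"
    have "real_of_int (L + T) \<le> w" "0 \<le> real_of_int (L + T)"
      using L T \<open>0 \<le> T\<close> \<open>T \<le> L\<close> by (simp_all add: w_def algebra_simps)
    then have "real_of_int ((L + T) * (2*L + 2*T + 2) + 1) \<le> w * (2 * w + 2) + 1"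
      by (simp add: mult_mono)
    also have "\<dots> = 2 * (1 + t)^2 * x^2 + 2 * (1 + t) * x + 1"
      unfolding w_def by (simp add: power2_eq_square algebra_simps)
    finally show ?thesis
      using range by linarith
  qed
  then have "2*L * (2*L + 4*T + 1) \<le> int (s_kn (nat \<lfloor>y\<rfloor>) n)"
    using \<open>0 \<le> T\<close> \<open>T \<le> L\<close> k kn by (intro s_kn_ge_hexagon) linarith+
  have "(x - 1) * ((2 + 4*t) * x - 6) \<le> real_of_int (L * (2*L + 4*T + 1))"
    unfolding L_def T_def using t(1) x by (rule floor_product_ge)
  then have "2 * (x - 1) * ((2 + 4*t) * x - 6) \<le> real_of_int (2*L * (2*L + 4*T + 1))"
    by (simp only: mult.assoc of_int_mult of_int_numeral)
  also have "\<dots> \<le> real (s_kn (nat \<lfloor>y\<rfloor>) n)"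
    using \<open>2*L * (2*L + 4*T + 1) \<le> int (s_kn (nat \<lfloor>y\<rfloor>) n)\<close> by (metis of_int_le_iff of_int_of_nat_eq)
  finally show ?thesis .
qed

lemma s_c_ge_hexagon_strict:
  assumes l: "0 < l" and t: "0 \<le> t" "t \<le> 1"
    and size: "(4 + 2*t) * l < c" and range: "2 * (1 + t)^2 * l^2 < 1"
  shows "ereal (4 * (1 + 2*t) * l^2) \<le> s_c c"
proof -
  define h where "h n = 2 * (l - 1 / sqrt (real n)) * ((2 + 4*t) * l - 6 / sqrt (real n))" for n :: nat
  have "h \<longlonglongrightarrow> 2 * l * ((2 + 4*t) * l)"
    unfolding h_def by real_asymp
  moreover have "2 * l * ((2 + 4*t) * l) = 4 * (1 + 2*t) * l^2"
    by (simp add: power2_eq_square algebra_simps)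
  ultimately have lim: "(\<lambda>n. ereal (h n)) \<longlonglongrightarrow> ereal (4 * (1 + 2*t) * l^2)"
    by (simp add: tendsto_ereal)
  have "ereal (4 * (1 + 2*t) * l^2) = liminf (\<lambda>n. ereal (h n))"
    using lim_imp_Liminf[OF sequentially_bot lim] by (rule sym)
  also have "\<dots> \<le> s_c c"
    unfolding s_c_def
  proof (rule Liminf_mono)
    have "\<forall>\<^sub>F n in sequentially. 3 \<le> l * sqrt (real n)"
      using l by real_asymp
    moreover have "\<forall>\<^sub>F n in sequentially. (4 + 2*t) * (l * sqrt (real n)) + 7 \<le> c * sqrt (real n)"
      using size by real_asymp
    moreover have "\<forall>\<^sub>F n in sequentially. c * sqrt (real n) \<le> n"
      by real_asymp
    moreover have "\<forall>\<^sub>F n in sequentially.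
        2 * (1 + t)^2 * l^2 * n + 2 * (1 + t) * (l * sqrt (real n)) + 1 \<le> n"
      using range by real_asymp
    ultimately show "\<forall>\<^sub>F n in sequentially.
        ereal (h n) \<le> ereal (real (s_kn (nat \<lfloor>c * sqrt (real n)\<rfloor>) n) / real n)"
    proof eventually_elim
      case (elim n)
      then have "0 < n"
        by (cases "n = 0") auto
      then have hn: "h n = 2 * (l * sqrt n - 1) * ((2 + 4*t) * (l * sqrt n) - 6) / n"
        unfolding h_def by (simp add: field_simps)
      have "(l * sqrt n)^2 = l^2 * n"
        by (simp add: power_mult_distrib)
      then have "2 * (1 + t)^2 * (l * sqrt n)^2 + 2 * (1 + t) * (l * sqrt n) + 1 \<le> n"
        using elim(4) by (simp only: mult.assoc)
      with t elim(1-3) have "2 * (l * sqrt n - 1) * ((2 + 4*t) * (l * sqrt n) - 6) \<le> s_kn (nat \<lfloor>c * sqrt n\<rfloor>) n"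
        by (intro s_kn_ge_hexagon_floor)
      then have "h n \<le> real (s_kn (nat \<lfloor>c * sqrt n\<rfloor>) n) / n"
        unfolding hn by (intro divide_right_mono) auto
      then show ?case
        by simp
    qed
  qed
  finally show ?thesis .
qed

lemma s_c_ge_hexagon:
  assumes l: "0 < l" and t: "0 \<le> t" "t \<le> 1"
    and size: "(4 + 2*t) * l \<le> c" and range: "2 * (1 + t)^2 * l^2 \<le> 1"
  shows "ereal (4 * (1 + 2*t) * l^2) \<le> s_c c"
proof (rule ereal_le_mult_one_interval)
  show "s_c c \<noteq> -\<infinity>"
    using s_c_nonneg[of c] by auto
  fix z :: ereal assume "0 < z" "z < 1"
  then obtain q where q: "z = ereal q" "0 < q" "q < 1"
    by (cases z) auto
  have "(4 + 2*t) * (sqrt q * l) < (4 + 2*t) * l"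
    using q l t by simp
  then have "(4 + 2*t) * (sqrt q * l) < c"
    using size by linarith
  have "2 * (1 + t)^2 * (sqrt q * l)^2 = q * (2 * (1 + t)^2 * l^2)"
    using q by (simp add: power_mult_distrib)
  also have "\<dots> < 2 * (1 + t)^2 * l^2"
    using q l t by simp
  finally have "2 * (1 + t)^2 * (sqrt q * l)^2 < 1"
    using range by linarith
  with \<open>(4 + 2*t) * (sqrt q * l) < c\<close> have "ereal (4 * (1 + 2*t) * (sqrt q * l)^2) \<le> s_c c"
    using q l t by (intro s_c_ge_hexagon_strict) auto
  then show "z * ereal (4 * (1 + 2*t) * l^2) \<le> s_c c"
    using q by (simp add: power_mult_distrib algebra_simps)
qed

lemma s_c_ge_small:
  assumes "0 < c" "c \<le> 3 * sqrt 2 / 2"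
  shows "ereal (c^2 / 3) \<le> s_c c"
proof -
  have "c^2 \<le> (3 * sqrt 2 / 2)^2"
    using assms by (intro power_mono) auto
  then have "2 * (1 + 1)^2 * (c / 6)^2 \<le> (1::real)"
    by (simp add: power_divide power_mult_distrib)
  then have "ereal (4 * (1 + 2*1) * (c / 6)^2) \<le> s_c c"
    using assms by (intro s_c_ge_hexagon) auto
  then show ?thesis
    by (simp add: power_divide)
qed

lemma s_c_ge_large:
  assumes "3 * sqrt 2 / 2 \<le> c" "c \<le> 2 * sqrt 2"
  shows "ereal (- (c^2) + 4 * sqrt 2 * c - 6) \<le> s_c c"
proof -
  define r where "r = sqrt 2"
  have r: "r * r = 2" "0 < r" "3 * r / 2 \<le> c" "c \<le> 2 * r"
    using assms unfolding r_def by simp_all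
  then have "0 < c - r"
    by linarith
  define t where "t = (2 * r - c) / (c - r)"
  define l where "l = (c - r) / 2"
  have "0 \<le> t" "t \<le> 1"
    using r \<open>0 < c - r\<close> unfolding t_def by (simp_all add: divide_nonneg_pos pos_divide_le_eq)
  have tc: "(1 + t) * (c - r) = r" "(1 + 2*t) * (c - r) = 3 * r - c" "(2 + t) * (c - r) = c"
    using \<open>0 < c - r\<close> unfolding t_def by (simp_all add: distrib_right)
  have l: "2 * l = c - r"
    unfolding l_def by simp
  then have size: "(4 + 2*t) * l = c"
    using tc(3) by algebra
  have range: "2 * (1 + t)^2 * l^2 = 1"
    using l tc(1) r(1) by algebra
  have rate: "4 * (1 + 2*t) * l^2 = - (c^2) + 4 * r * c - 6"
    using l tc(2) r(1) by algebra
  have "0 < l"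
    using \<open>0 < c - r\<close> unfolding l_def by simp
  with \<open>0 \<le> t\<close> \<open>t \<le> 1\<close> size range have "ereal (4 * (1 + 2*t) * l^2) \<le> s_c c"
    by (intro s_c_ge_hexagon) simp_all
  then show ?thesis
    unfolding rate r_def .
qed

lemma alpha_bound_le_small_rate:
  fixes a c :: real
  assumes "a \<noteq> 0"
  shows "- (c^2) + 7 * a * c + c / a - 11 * a^2 - 2 - 1 / (4 * a^2) \<le> c^2 / 3"
proof -
  define Q where "Q = 16 * a^2 * c^2 / 3 - 28 * a^3 * c - 4 * a * c + 44 * a^4 + 8 * a^2 + 1"
  have Q: "4 * a^2 * (c^2 / 3 - (- (c^2) + 7 * a * c + c / a - 11 * a^2 - 2 - 1 / (4 * a^2))) = Q"
    unfolding Q_def using assms by (simp add: field_simps power2_eq_square power3_eq_cube power4_eq_xxxx)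
  have "(64 * a^2 / 3) * Q =
          (2 * (16 * a^2 / 3) * c - (28 * a^3 + 4 * a))^2 + (16 * a^2 / 3) * (29 * (a^2 - 5/29)^2 + 4/29)"
    unfolding Q_def by (simp add: field_simps power2_eq_square power3_eq_cube power4_eq_xxxx)
  then have "0 \<le> (64 * a^2 / 3) * Q"
    by simp
  then have "0 \<le> Q"
    using assms by (simp add: zero_le_mult_iff)
  then have "0 \<le> 4 * a^2 * (c^2 / 3 - (- (c^2) + 7 * a * c + c / a - 11 * a^2 - 2 - 1 / (4 * a^2)))"
    unfolding Q .
  moreover have "0 < 4 * a^2"
    using assms by simp
  ultimately show ?thesis
    by (simp add: zero_le_mult_iff)
qed

lemma large_rate_comparison_scaled:
  fixes u w :: real
  assumes "0 < u" "3/2 \<le> w" "w \<le> 2"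
  shows "2 * w * (7 * u / 2 + 1 / u - 4) \<le> 11 * u^2 / 2 + 1 / (2 * u^2) - 4"
proof -
  define K where "K = 7 * u / 2 + 1 / u - 4"
  define R where "R = 11 * u^2 / 2 + 1 / (2 * u^2) - 4"
  \<comment> \<open>The left side is affine in w, so it suffices to check the endpoints w = 2 and w = 3/2.\<close>
  have "0 < 2 * u^2"
    using assms by simp
  have "2 * u^2 * (R - 4 * K) = (u - 1)^2 * (11 * (u - 3/11)^2 + 2/11)"
    unfolding R_def K_def using assms by (simp add: field_simps power2_eq_square power3_eq_cube power4_eq_xxxx)
  then have "0 \<le> 2 * u^2 * (R - 4 * K)"
    by simp
  with \<open>0 < 2 * u^2\<close> have "4 * K \<le> R"
    by (simp add: zero_le_mult_iff)
  have "2 * u^2 * (R - 3 * K) = 11 * (u^2 - 21 * u / 22 + 1/4)^2 + (21/44) * (u - 11/14)^2 + 1/56"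
    unfolding R_def K_def using assms by (simp add: field_simps power2_eq_square power3_eq_cube power4_eq_xxxx)
  then have "0 \<le> 2 * u^2 * (R - 3 * K)"
    by (simp add: add_nonneg_nonneg)
  with \<open>0 < 2 * u^2\<close> have "3 * K \<le> R"
    by (simp add: zero_le_mult_iff)
  have "2 * w * K \<le> R"
  proof (cases "0 \<le> K")
    case True
    then have "2 * w * K \<le> 4 * K"
      using assms by (intro mult_right_mono) auto
    with \<open>4 * K \<le> R\<close> show ?thesis
      by linarith
  next
    case False
    then have "2 * w * K \<le> 3 * K"
      using assms by (intro mult_right_mono_neg) auto
    with \<open>3 * K \<le> R\<close> show ?thesis
      by linarith
  qed
  then show ?thesis
    unfolding K_def R_def .
qed

lemma alpha_bound_le_large_rate:
  fixes a c :: real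
  assumes "0 < a" "3 * sqrt 2 / 2 \<le> c" "c \<le> 2 * sqrt 2"
  shows "- (c^2) + 7 * a * c + c / a - 11 * a^2 - 2 - 1 / (4 * a^2) \<le> - (c^2) + 4 * sqrt 2 * c - 6"
proof -
  define r where "r = sqrt 2"
  have r: "r * r = 2" "0 < r"
    unfolding r_def by simp_all
  define w where "w = c / r"
  define u where "u = a * r"
  have "0 < u"
    unfolding u_def using assms r by simp
  have c: "c = w * r" and a: "a = u / r"
    unfolding w_def u_def using r by simp_all
  have "3/2 \<le> w" "w \<le> 2"
    unfolding w_def using assms r unfolding r_def[symmetric] by (simp_all add: field_simps)
  with \<open>0 < u\<close> have scaled: "2 * w * (7 * u / 2 + 1 / u - 4) \<le> 11 * u^2 / 2 + 1 / (2 * u^2) - 4"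
    by (intro large_rate_comparison_scaled)
  have subst: "r * c = 2 * w" "a * c = w * u" "c / a = 2 * w / u" "a^2 = u^2 / 2"
    unfolding c a using r \<open>0 < u\<close> by (simp_all add: field_simps power2_eq_square)
  have "(- (c^2) + 4 * r * c - 6) - (- (c^2) + 7 * a * c + c / a - 11 * a^2 - 2 - 1 / (4 * a^2))
      = 4 * (r * c) - 4 - 7 * (a * c) - c / a + 11 * a^2 + 1 / (4 * a^2)"
    by (simp add: algebra_simps)
  also have "\<dots> = 4 * (2 * w) - 4 - 7 * (w * u) - 2 * w / u + 11 * (u^2 / 2) + 1 / (4 * (u^2 / 2))"
    unfolding subst ..
  also have "\<dots> = 11 * u^2 / 2 + 1 / (2 * u^2) - 4 - 2 * w * (7 * u / 2 + 1 / u - 4)"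
    using \<open>0 < u\<close> by (simp add: field_simps)
  finally show ?thesis
    using scaled unfolding r_def by linarith
qed

lemma c0_le: "c0 \<le> 3 * sqrt 2 / 2"
proof -
  have "7 / 3 \<le> sqrt 6"
    by (rule real_le_rsqrt) (simp add: power2_eq_square)
  then have "7 \<le> 3 * (sqrt 2 * sqrt 3)"
    by (simp add: real_sqrt_mult[symmetric])
  then show ?thesis
    unfolding c0_def by (simp add: field_simps)
qed

lemma c0_less_c1: "c0 < c1"
proof -
  have "3 * sqrt 2 / 2 < 2 * sqrt 2"
    by simp
  with c0_le show ?thesis
    unfolding c1_def by linarith
qed

lemma alpha_pos:
  assumes "c0 \<le> c"
  shows "0 < alpha c"
proof -
  have "sqrt 3 * sqrt 2 \<le> 4"
    using real_sqrt_le_iff[of 6 16] by (simp add: real_sqrt_mult[symmetric])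
  then have "sqrt 3 / 4 \<le> 1 / sqrt 2"
    by (simp add: field_simps)
  then have "0 \<le> (1 / sqrt 2 - sqrt 3 / 4) / (c1 - c0) * (c - c0)"
    using c0_less_c1 assms by simp
  moreover have "0 < sqrt 3 / 4"
    by simp
  ultimately show ?thesis
    unfolding alpha_def by linarith
qed

theorem lemma5:
  fixes c :: real
  assumes "c > 0"
  shows "(c \<le> c0 \<longrightarrow> s_c c \<ge> ereal (9 * c^2 / 28)) \<and>
         (c0 \<le> c \<and> c \<le> c1 \<longrightarrow>
            s_c c \<ge> ereal (- (c^2) + 7 * alpha c * c + c / alpha c - 11 * (alpha c)^2 - 2
                             - 1 / (4 * (alpha c)^2)))"
proof (intro conjI impI)
  assume "c \<le> c0"
  with assms c0_le have "ereal (c^2 / 3) \<le> s_c c"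
    by (intro s_c_ge_small) auto
  then show "ereal (9 * c^2 / 28) \<le> s_c c"
    by (rule order_trans[rotated]) simp
next
  assume c: "c0 \<le> c \<and> c \<le> c1"
  then have "0 < alpha c"
    by (intro alpha_pos) simp
  show "ereal (- (c^2) + 7 * alpha c * c + c / alpha c - 11 * (alpha c)^2 - 2
                - 1 / (4 * (alpha c)^2)) \<le> s_c c"
  proof (cases "c \<le> 3 * sqrt 2 / 2")
    case True
    with assms have "ereal (c^2 / 3) \<le> s_c c"
      by (intro s_c_ge_small)
    moreover have "- (c^2) + 7 * alpha c * c + c / alpha c - 11 * (alpha c)^2 - 2
                     - 1 / (4 * (alpha c)^2) \<le> c^2 / 3"
      using \<open>0 < alpha c\<close> by (intro alpha_bound_le_small_rate) simp
    ultimately show ?thesis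
      by (meson ereal_less_eq(3) order_trans)
  next
    case False
    with c have "ereal (- (c^2) + 4 * sqrt 2 * c - 6) \<le> s_c c"
      by (intro s_c_ge_large) (auto simp: c1_def)
    moreover have "- (c^2) + 7 * alpha c * c + c / alpha c - 11 * (alpha c)^2 - 2
                     - 1 / (4 * (alpha c)^2) \<le> - (c^2) + 4 * sqrt 2 * c - 6"
      using \<open>0 < alpha c\<close> False c by (intro alpha_bound_le_large_rate) (auto simp: c1_def)
    ultimately show ?thesis
      by (meson ereal_less_eq(3) order_trans)
  qed
qed

end
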